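(* Let $x_1<x_2<\cdots<x_n$ be a partition of $[x_1,x_n]$, with $h_i=x_{i+1}-x_i$ ($1\le i\le n-1$) and $\hat h=\max_i h_i$. Let $f\in C^4([x_1,x_n])$ and $L>0$ with $|f^{(4)}(x)|\le L$ for all $x\in[x_1,x_n]$, and assume there is $K>0$ with $\hat h/h_i\le K$ for all $i=1,\dots,n-1$. Write $f_i=f(x_i)$, $f'_i=f'(x_i)$, $m_i=(f_{i+1}-f_i)/h_i$, $\lambda_i=\frac{h_{i+1}}{h_i+h_{i+1}}$, $\mu_i=\frac{h_i}{h_i+h_{i+1}}$. Let $\dot f_1=f'_1$, $\dot f_n=f'_n$ and let $\dot f_2,\dots,\dot f_{n-1}$ be the solution of $$\lambda_{i-1}\dot f_{i-1}+2\dot f_i+\mu_{i-1}\dot f_{i+1}=3(\lambda_{i-1}m_{i-1}+\mu_{i-1}m_i),\qquad i=2,\dots,n-1.$$ Fix an index $i_0$ with $1<i_0<n$, constants $p_{i_0},T>0$, and a number $\tilde f_{i_0}$ with $|f'_{i_0}-\tilde f_{i_0}|=T\hat h^{p_{i_0}}$. Define the modified values $\dot F_{i_0}$ by $(\dot F_{i_0})_{i_0}=\tilde f_{i_0}$ and $(\dot F_{i_0})_i=\dot f_i$ for $i\ne i_0$. Then $$|(\dot F_{i_0})_i-f'_i|=\begin{cases}O(\hat h^{p_{i_0}}),& i=i_0,\\ O(\hat h^3),& i\ne i_0.\end{cases}$$ Moreover, the piecewise cubic Hermite interpolant $P$ built with the derivative values $\dot F_{i_0}$ (on each $[x_i,x_{i+1}]$,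 $P$ is the cubic with $P(x_i)=f_i$, $P(x_{i+1})=f_{i+1}$, $P'(x_i)=(\dot F_{i_0})_i$, $P'(x_{i+1})=(\dot F_{i_0})_{i+1}$) has $C^2$ regularity on $[x_1,x_n]$ except at the points $x_{i_0-1},x_{i_0},x_{i_0+1}$.
   Context: $O(\hat h^q)$ denotes a quantity bounded in absolute value by $C\hat h^q$ with $C$ independent of the partition (it may depend on $f$, $L$, $K$, $T$). *)

theory Defs
  imports "HOL-Analysis.Analysis"
begin

text \<open>Partitions are indexed from 1 as in the paper: knots x 1 < ... < x n.\<close>

definition hh :: "(nat \<Rightarrow> real) \<Rightarrow> nat \<Rightarrow> real" where
  "hh x i = x (Suc i) - x i"

definition hmax :: "(nat \<Rightarrow> real) \<Rightarrow> nat \<Rightarrow> real" where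
  "hmax x n = Max ((\<lambda>i. hh x i) ` {1..<n})"

definition slope :: "(real \<Rightarrow> real) \<Rightarrow> (nat \<Rightarrow> real) \<Rightarrow> nat \<Rightarrow> real" where
  "slope f x i = (f (x (Suc i)) - f (x i)) / hh x i"

definition lam :: "(nat \<Rightarrow> real) \<Rightarrow> nat \<Rightarrow> real" where
  "lam x i = hh x (Suc i) / (hh x i + hh x (Suc i))"

definition mu :: "(nat \<Rightarrow> real) \<Rightarrow> nat \<Rightarrow> real" where
  "mu x i = hh x i / (hh x i + hh x (Suc i))"

definition spline_slopes ::
  "(real \<Rightarrow> real) \<Rightarrow> (real \<Rightarrow> real) \<Rightarrow> (nat \<Rightarrow> real) \<Rightarrow> nat \<Rightarrow> (nat \<Rightarrow> real) \<Rightarrow> bool" where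
  "spline_slopes f f' x n fd \<longleftrightarrow>
     fd 1 = f' (x 1) \<and> fd n = f' (x n) \<and>
     (\<forall>i\<in>{2..n-1}. lam x (i-1) * fd (i-1) + 2 * fd i + mu x (i-1) * fd (Suc i)
                    = 3 * (lam x (i-1) * slope f x (i-1) + mu x (i-1) * slope f x i))"

definition pw_cubic_hermite ::
  "(nat \<Rightarrow> real) \<Rightarrow> nat \<Rightarrow> (real \<Rightarrow> real) \<Rightarrow> (nat \<Rightarrow> real) \<Rightarrow> (real \<Rightarrow> real) \<Rightarrow> bool" where
  "pw_cubic_hermite x n f d P \<longleftrightarrow>
     (\<forall>i\<in>{1..<n}. \<exists>c0 c1 c2 c3 :: real.
        (\<forall>t\<in>{x i..x (Suc i)}. P t = c0 + c1 * t + c2 * t^2 + c3 * t^3) \<and>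
        P (x i) = f (x i) \<and> P (x (Suc i)) = f (x (Suc i)) \<and>
        c1 + 2 * c2 * x i + 3 * c3 * (x i)^2 = d i \<and>
        c1 + 2 * c2 * x (Suc i) + 3 * c3 * (x (Suc i))^2 = d (Suc i))"

definition C2_except_on :: "real set \<Rightarrow> real set \<Rightarrow> (real \<Rightarrow> real) \<Rightarrow> bool" where
  "C2_except_on S E P \<longleftrightarrow>
     (\<exists>P1 P2. (\<forall>t\<in>S - E. (P has_real_derivative P1 t) (at t within S) \<and>
                          (P1 has_real_derivative P2 t) (at t within S)) \<and>
              continuous_on (S - E) P2)"

end

theory Submission
  imports Defs
begin

(* Let e i = fd i - f'(x i) be the error of the clamped spline slopes. Subtracting the slope
   relation from the same relation evaluated at the exact derivatives shows that e solves the
   tridiagonal system with right-hand side the residual of f' in that relation. The relation is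
   exact for cubics, so a fourth-order Taylor expansion about x i bounds the residual by
   L h^3; since the system has diagonal 2 and off-diagonal weights lambda + mu = 1, a maximum
   principle gives |e i| <= L h^3 on every mesh.
   On either side of a knot x j the second derivative of the Hermite cubic is an affine
   function of the data on that piece, and the two agree exactly when row j of the slope
   system holds. That row only involves the slopes at x (j - 1), x j, x (j + 1), so it survives
   the perturbation unless x j is one of x (i0 - 1), x i0, x (i0 + 1). *)

lemma taylor_cubic_remainders:
  fixes f f1 f2 f3 f4 :: "real \<Rightarrow> real"
  assumes d0: "\<And>t. t \<in> {a..b} \<Longrightarrow> (f has_real_derivative f1 t) (at t within {a..b})"
    and d1: "\<And>t. t \<in> {a..b} \<Longrightarrow> (f1 has_real_derivative f2 t) (at t within {a..b})"
    and d2: "\<And>t. t \<in> {a..b} \<Longrightarrow> (f2 has_real_derivative f3 t) (at t within {a..b})"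
    and d3: "\<And>t. t \<in> {a..b} \<Longrightarrow> (f3 has_real_derivative f4 t) (at t within {a..b})"
    and bound: "\<And>t. t \<in> {a..b} \<Longrightarrow> \<bar>f4 t\<bar> \<le> L"
    and u: "u \<in> {a..b}" and z: "z \<in> {a..b}"
  shows "\<bar>f z - (f u + f1 u * (z - u) + f2 u * (z - u)^2 / 2 + f3 u * (z - u)^3 / 6)\<bar>
           \<le> L * \<bar>z - u\<bar>^4 / 6"
    and "\<bar>f1 z - (f1 u + f2 u * (z - u) + f3 u * (z - u)^2 / 2)\<bar> \<le> L * \<bar>z - u\<bar>^3 / 2"
proof -
  define D where "D = (!) [f, f1, f2, f3, f4]"
  have tower: "(D i has_real_derivative D (Suc i) t) (at t within {a..b})"
    if "t \<in> {a..b}" "i \<le> 3" for i t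
  proof -
    have "i = 0 \<or> i = 1 \<or> i = 2 \<or> i = 3" using \<open>i \<le> 3\<close> by auto
    then show ?thesis using d0 d1 d2 d3 that by (auto simp: D_def numeral_eq_Suc)
  qed
  have "\<bar>D 0 z - (\<Sum>i\<le>3. D i u * (z - u)^i / fact i)\<bar> \<le> L * \<bar>z - u\<bar>^4 / fact 3"
    using field_Taylor[of "{a..b}" 3 D L u z] tower bound u z by (simp add: D_def)
  then show "\<bar>f z - (f u + f1 u * (z - u) + f2 u * (z - u)^2 / 2 + f3 u * (z - u)^3 / 6)\<bar>
           \<le> L * \<bar>z - u\<bar>^4 / 6"
    by (simp add: D_def numeral_eq_Suc)
  have "\<bar>D 1 z - (\<Sum>i\<le>2. D (Suc i) u * (z - u)^i / fact i)\<bar> \<le> L * \<bar>z - u\<bar>^3 / fact 2"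
    using field_Taylor[of "{a..b}" 2 "\<lambda>i. D (Suc i)" L u z] tower[of _ "Suc _"] bound u z
    by (simp add: D_def)
  then show "\<bar>f1 z - (f1 u + f2 u * (z - u) + f3 u * (z - u)^2 / 2)\<bar> \<le> L * \<bar>z - u\<bar>^3 / 2"
    by (simp add: D_def numeral_eq_Suc)
qed

lemma spline_residual_bound:
  fixes f f1 f2 f3 f4 :: "real \<Rightarrow> real"
  assumes d0: "\<And>t. t \<in> {a..b} \<Longrightarrow> (f has_real_derivative f1 t) (at t within {a..b})"
    and d1: "\<And>t. t \<in> {a..b} \<Longrightarrow> (f1 has_real_derivative f2 t) (at t within {a..b})"
    and d2: "\<And>t. t \<in> {a..b} \<Longrightarrow> (f2 has_real_derivative f3 t) (at t within {a..b})"
    and d3: "\<And>t. t \<in> {a..b} \<Longrightarrow> (f3 has_real_derivative f4 t) (at t within {a..b})"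
    and bound: "\<And>t. t \<in> {a..b} \<Longrightarrow> \<bar>f4 t\<bar> \<le> L"
    and ivl: "u - p \<in> {a..b}" "u + q \<in> {a..b}"
    and p: "0 < p" "p \<le> H" and q: "0 < q" "q \<le> H"
  shows "\<bar>3 * (q / (p + q) * ((f u - f (u - p)) / p) + p / (p + q) * ((f (u + q) - f u) / q))
          - (q / (p + q) * f1 (u - p) + 2 * f1 u + p / (p + q) * f1 (u + q))\<bar> \<le> L * H^3"
proof -
  have u: "u \<in> {a..b}" using ivl p q by auto
  have L: "0 \<le> L" using bound[OF u] by linarith
  define R0 where "R0 z = f z - (f u + f1 u * (z - u) + f2 u * (z - u)^2 / 2 + f3 u * (z - u)^3 / 6)" for z
  define R1 where "R1 z = f1 z - (f1 u + f2 u * (z - u) + f3 u * (z - u)^2 / 2)" for z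
  define \<alpha> where "\<alpha> = q / (p + q)"
  define \<beta> where "\<beta> = p / (p + q)"
  have taylor: "\<bar>R0 z\<bar> \<le> L * \<bar>z - u\<bar>^4 / 6" "\<bar>R1 z\<bar> \<le> L * \<bar>z - u\<bar>^3 / 2" if "z \<in> {a..b}" for z
    using taylor_cubic_remainders[OF d0 d1 d2 d3 bound u that] unfolding R0_def R1_def by auto
  \<comment> \<open>the three-term relation is exact on cubics, so only the Taylor remainders survive\<close>
  have residual: "3 * (\<alpha> * ((f u - f (u - p)) / p) + \<beta> * ((f (u + q) - f u) / q))
          - (\<alpha> * f1 (u - p) + 2 * f1 u + \<beta> * f1 (u + q))
        = \<beta> * (3 * (R0 (u + q) / q) - R1 (u + q)) + \<alpha> * (- 3 * (R0 (u - p) / p) - R1 (u - p))"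
  proof -
    have "p * inverse p = 1" "q * inverse q = 1" "(p + q) * inverse (p + q) = 1"
      using p q by auto
    then show ?thesis unfolding R0_def R1_def \<alpha>_def \<beta>_def divide_inverse by algebra
  qed
  have remainders: "3 * \<bar>R0 z / h\<bar> + \<bar>R1 z\<bar> \<le> L * h^3"
    if "z \<in> {a..b}" "\<bar>z - u\<bar> = h" "0 < h" for z h
  proof -
    have "3 * \<bar>R0 z / h\<bar> \<le> L * h^3 / 2"
      using taylor(1)[OF that(1)] that(2,3) by (simp add: abs_divide divide_simps power_eq_if mult_ac)
    then show ?thesis using taylor(2)[OF that(1), unfolded that(2)] by linarith
  qed
  have "\<bar>3 * (R0 (u + q) / q) - R1 (u + q)\<bar> \<le> L * q^3"
    using remainders[OF ivl(2) _ q(1)] q(1) by linarith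
  also have "\<dots> \<le> L * H^3" using L q by (intro mult_left_mono power_mono) auto
  finally have right: "\<bar>3 * (R0 (u + q) / q) - R1 (u + q)\<bar> \<le> L * H^3" .
  have "\<bar>- 3 * (R0 (u - p) / p) - R1 (u - p)\<bar> \<le> L * p^3"
    using remainders[OF ivl(1) _ p(1)] p(1) by linarith
  also have "\<dots> \<le> L * H^3" using L p by (intro mult_left_mono power_mono) auto
  finally have left: "\<bar>- 3 * (R0 (u - p) / p) - R1 (u - p)\<bar> \<le> L * H^3" .
  have weights: "0 \<le> \<alpha>" "0 \<le> \<beta>" "\<alpha> + \<beta> = 1"
    using p q by (auto simp: \<alpha>_def \<beta>_def add_divide_distrib[symmetric])
  have "\<bar>3 * (\<alpha> * ((f u - f (u - p)) / p) + \<beta> * ((f (u + q) - f u) / q))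
          - (\<alpha> * f1 (u - p) + 2 * f1 u + \<beta> * f1 (u + q))\<bar>
      = \<bar>\<beta> * (3 * (R0 (u + q) / q) - R1 (u + q)) + \<alpha> * (- 3 * (R0 (u - p) / p) - R1 (u - p))\<bar>"
    unfolding residual ..
  also have "\<dots> \<le> \<beta> * (L * H^3) + \<alpha> * (L * H^3)"
    using weights left right
    by (intro order.trans[OF abs_triangle_ineq] add_mono) (auto simp: abs_mult intro: mult_left_mono)
  also have "\<dots> = L * H^3" using weights(3) by (simp add: distrib_right[symmetric] add.commute)
  finally show ?thesis unfolding \<alpha>_def \<beta>_def .
qed

lemma tridiagonal_max_principle:
  fixes e \<alpha> \<beta> :: "nat \<Rightarrow> real"
  assumes "1 \<le> n" "e 1 = 0" "e n = 0" "0 \<le> R"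
    and weights: "\<And>i. i \<in> {2..n-1} \<Longrightarrow> 0 \<le> \<alpha> i \<and> 0 \<le> \<beta> i \<and> \<alpha> i + \<beta> i = 1"
    and rows: "\<And>i. i \<in> {2..n-1} \<Longrightarrow> \<bar>\<alpha> i * e (i - 1) + 2 * e i + \<beta> i * e (Suc i)\<bar> \<le> R"
    and i: "i \<in> {1..n}"
  shows "\<bar>e i\<bar> \<le> R"
proof -
  define M where "M = Max ((\<lambda>i. \<bar>e i\<bar>) ` {1..n})"
  have M_ge: "\<bar>e k\<bar> \<le> M" if "k \<in> {1..n}" for k
    unfolding M_def using that by (intro Max_ge) auto
  have "M \<in> (\<lambda>i. \<bar>e i\<bar>) ` {1..n}"
    unfolding M_def using \<open>1 \<le> n\<close> by (intro Max_in) auto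
  then obtain j where j: "j \<in> {1..n}" "\<bar>e j\<bar> = M" by auto
  have "M \<le> R"
  proof (cases "j = 1 \<or> j = n")
    case True
    then show ?thesis using j assms(2-4) by auto
  next
    case False
    then have j_inner: "j \<in> {2..n-1}" using j(1) by auto
    have "\<bar>e (j - 1)\<bar> \<le> M" "\<bar>e (Suc j)\<bar> \<le> M" using j_inner by (auto intro!: M_ge)
    then have "\<bar>\<alpha> j * e (j - 1)\<bar> \<le> \<alpha> j * M" "\<bar>\<beta> j * e (Suc j)\<bar> \<le> \<beta> j * M"
      using weights[OF j_inner] by (auto simp: abs_mult intro: mult_left_mono)
    moreover have "\<alpha> j * M + \<beta> j * M = M"
      using weights[OF j_inner] by (simp add: distrib_right[symmetric])
    ultimately show ?thesis using rows[OF j_inner] j(2) by linarith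
  qed
  then show ?thesis using M_ge[OF i] by linarith
qed

lemma knots_less:
  fixes x :: "nat \<Rightarrow> real"
  assumes "\<forall>i\<in>{1..<n}. x i < x (Suc i)" "1 \<le> i" "i < j" "j \<le> n"
  shows "x i < x j"
  using assms(3,4)
proof (induction j)
  case (Suc j)
  then show ?case using assms(1,2) by (cases "i = j") (auto intro: less_trans)
qed simp

lemma knot_mem_span:
  fixes x :: "nat \<Rightarrow> real"
  assumes "\<forall>i\<in>{1..<n}. x i < x (Suc i)" "i \<in> {1..n}"
  shows "x i \<in> {x 1..x n}"
  using knots_less[OF assms(1), of 1 i] knots_less[OF assms(1), of i n] assms(2)
  by (cases "i = 1"; cases "i = n") auto

lemma hh_le_hmax: "i \<in> {1..<n} \<Longrightarrow> hh x i \<le> hmax x n"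
  unfolding hmax_def by (intro Max_ge) auto

lemma hmax_pos:
  assumes "\<forall>i\<in>{1..<n}. x i < x (Suc i)" "2 \<le> n"
  shows "0 < hmax x n"
proof -
  have "0 < hh x 1" using assms by (simp add: hh_def)
  then show ?thesis using hh_le_hmax[of 1 n x] assms(2) by simp
qed

lemma lam_mu_convex_weights:
  assumes "0 < hh x i" "0 < hh x (Suc i)"
  shows "0 \<le> lam x i" "0 \<le> mu x i" "lam x i + mu x i = 1"
  using assms by (auto simp: lam_def mu_def add_divide_distrib[symmetric])

lemma spline_slopes_error:
  fixes f f1 f2 f3 f4 :: "real \<Rightarrow> real" and x fd :: "nat \<Rightarrow> real"
  assumes knots: "\<forall>i\<in>{1..<n}. x i < x (Suc i)" and "2 \<le> n"
    and d0: "\<And>t. t \<in> {x 1..x n} \<Longrightarrow> (f has_real_derivative f1 t) (at t within {x 1..x n})"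
    and d1: "\<And>t. t \<in> {x 1..x n} \<Longrightarrow> (f1 has_real_derivative f2 t) (at t within {x 1..x n})"
    and d2: "\<And>t. t \<in> {x 1..x n} \<Longrightarrow> (f2 has_real_derivative f3 t) (at t within {x 1..x n})"
    and d3: "\<And>t. t \<in> {x 1..x n} \<Longrightarrow> (f3 has_real_derivative f4 t) (at t within {x 1..x n})"
    and bound: "\<And>t. t \<in> {x 1..x n} \<Longrightarrow> \<bar>f4 t\<bar> \<le> L"
    and spline: "spline_slopes f f1 x n fd"
    and i: "i \<in> {1..n}"
  shows "\<bar>fd i - f1 (x i)\<bar> \<le> L * hmax x n ^ 3"
proof (rule tridiagonal_max_principle[where e="\<lambda>k. fd k - f1 (x k)" and
      \<alpha>="\<lambda>k. lam x (k - 1)" and \<beta>="\<lambda>k. mu x (k - 1)", OF _ _ _ _ _ _ i])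
  have hh_pos: "0 < hh x k" if "k \<in> {1..<n}" for k using knots that by (simp add: hh_def)
  show "1 \<le> n" "fd 1 - f1 (x 1) = 0" "fd n - f1 (x n) = 0"
    using spline \<open>2 \<le> n\<close> by (auto simp: spline_slopes_def)
  have "x 1 \<in> {x 1..x n}" using knot_mem_span[OF knots, of 1] \<open>2 \<le> n\<close> by simp
  then have "0 \<le> L" using bound by fastforce
  then show "0 \<le> L * hmax x n ^ 3" using hmax_pos[OF knots \<open>2 \<le> n\<close>] by simp
  fix k assume k: "k \<in> {2..n-1}"
  then have k_pieces: "k - 1 \<in> {1..<n}" "k \<in> {1..<n}" and k_suc: "Suc (k - 1) = k" by auto
  show "0 \<le> lam x (k - 1) \<and> 0 \<le> mu x (k - 1) \<and> lam x (k - 1) + mu x (k - 1) = 1"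
    using lam_mu_convex_weights[of x "k - 1"] hh_pos[OF k_pieces(1)] hh_pos[OF k_pieces(2)]
    unfolding k_suc by auto
  have "lam x (k - 1) * (fd (k - 1) - f1 (x (k - 1))) + 2 * (fd k - f1 (x k))
          + mu x (k - 1) * (fd (Suc k) - f1 (x (Suc k)))
      = 3 * (lam x (k - 1) * slope f x (k - 1) + mu x (k - 1) * slope f x k)
          - (lam x (k - 1) * f1 (x (k - 1)) + 2 * f1 (x k) + mu x (k - 1) * f1 (x (Suc k)))"
    using spline k unfolding spline_slopes_def by (simp add: algebra_simps)
  also have "\<bar>\<dots>\<bar> \<le> L * hmax x n ^ 3"
  proof -
    have nbrs: "x k - hh x (k - 1) = x (k - 1)" "x k + hh x k = x (Suc k)"
      using k_suc unfolding hh_def by simp_all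
    have nbrs_mem: "x (k - 1) \<in> {x 1..x n}" "x (Suc k) \<in> {x 1..x n}"
      using k by (intro knot_mem_span[OF knots]; auto)+
    show ?thesis
      unfolding lam_def mu_def slope_def k_suc
      by (rule spline_residual_bound[where ?f2.0=f2 and ?f3.0=f3 and ?f4.0=f4 and u="x k"
            and p="hh x (k - 1)" and q="hh x k", unfolded nbrs])
        (use d0 d1 d2 d3 bound nbrs_mem hh_pos k_pieces hh_le_hmax in auto)
  qed
  finally show "\<bar>lam x (k - 1) * (fd (k - 1) - f1 (x (k - 1))) + 2 * (fd k - f1 (x k))
          + mu x (k - 1) * (fd (Suc k) - f1 (x (Suc k)))\<bar> \<le> L * hmax x n ^ 3" .
qed

lemma has_real_derivative_within_glue:
  fixes F g h :: "real \<Rightarrow> real"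
  assumes "t \<in> S" "0 < \<delta>"
    and left: "\<And>s. s \<in> S \<Longrightarrow> t - \<delta> < s \<Longrightarrow> s \<le> t \<Longrightarrow> F s = g s"
    and right: "\<And>s. s \<in> S \<Longrightarrow> t \<le> s \<Longrightarrow> s < t + \<delta> \<Longrightarrow> F s = h s"
    and "(g has_real_derivative D) (at t)" "(h has_real_derivative D) (at t)"
  shows "(F has_real_derivative D) (at t within S)"
proof -
  have "(F has_real_derivative D) (at t within S \<inter> {..t})"
    by (rule has_field_derivative_transform_within[OF has_field_derivative_at_within[OF assms(5)] \<open>0 < \<delta>\<close>])
       (use assms(1) left in \<open>auto simp: dist_real_def\<close>)
  moreover have "(F has_real_derivative D) (at t within S \<inter> {t..})"
    by (rule has_field_derivative_transform_within[OF has_field_derivative_at_within[OF assms(6)] \<open>0 < \<delta>\<close>])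
       (use assms(1) right in \<open>auto simp: dist_real_def\<close>)
  ultimately have "(F has_real_derivative D) (at t within S \<inter> {..t} \<union> S \<inter> {t..})"
    unfolding has_field_derivative_iff Lim_within_Un by blast
  moreover have "S \<inter> {..t} \<union> S \<inter> {t..} = S" by auto
  ultimately show ?thesis by simp
qed

lemma continuous_within_glue:
  fixes F g h :: "real \<Rightarrow> real"
  assumes "t \<in> S" "0 < \<delta>"
    and left: "\<And>s. s \<in> S \<Longrightarrow> t - \<delta> < s \<Longrightarrow> s \<le> t \<Longrightarrow> F s = g s"
    and right: "\<And>s. s \<in> S \<Longrightarrow> t \<le> s \<Longrightarrow> s < t + \<delta> \<Longrightarrow> F s = h s"
    and "isCont g t" "isCont h t"
  shows "continuous (at t within S) F"
proof -
  have "continuous (at t within S \<inter> {..t}) F"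
    by (rule continuous_transform_within[OF continuous_at_imp_continuous_at_within[OF assms(5)] \<open>0 < \<delta>\<close>])
       (use assms(1) left in \<open>auto simp: dist_real_def\<close>)
  moreover have "continuous (at t within S \<inter> {t..}) F"
    by (rule continuous_transform_within[OF continuous_at_imp_continuous_at_within[OF assms(6)] \<open>0 < \<delta>\<close>])
       (use assms(1) right in \<open>auto simp: dist_real_def\<close>)
  ultimately have "continuous (at t within S \<inter> {..t} \<union> S \<inter> {t..}) F"
    unfolding continuous_within Lim_within_Un by blast
  moreover have "S \<inter> {..t} \<union> S \<inter> {t..} = S" by auto
  ultimately show ?thesis by simp
qed

locale piecewise_C2 =
  fixes x :: "nat \<Rightarrow> real" and n :: nat and E :: "real set"
    and P :: "real \<Rightarrow> real" and q q1 q2 :: "nat \<Rightarrow> real \<Rightarrow> real"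
  assumes knots: "\<forall>i\<in>{1..<n}. x i < x (Suc i)" and two_le_n: "2 \<le> n"
    and P_piece: "\<And>i t. i \<in> {1..<n} \<Longrightarrow> t \<in> {x i..x (Suc i)} \<Longrightarrow> P t = q i t"
    and q_deriv: "\<And>i t. (q i has_real_derivative q1 i t) (at t)"
    and q1_deriv: "\<And>i t. (q1 i has_real_derivative q2 i t) (at t)"
    and q2_cont: "\<And>i t. isCont (q2 i) t"
    and q1_match: "\<And>j. j \<in> {2..n-1} \<Longrightarrow> q1 (j - 1) (x j) = q1 j (x j)"
    and q2_match: "\<And>j. j \<in> {2..n-1} \<Longrightarrow> x j \<notin> E \<Longrightarrow> q2 (j - 1) (x j) = q2 j (x j)"
begin

(* At an interior knot both adjacent pieces qualify; the choice affects P' nowhere and P''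
   only at knots in E. *)
definition piece :: "real \<Rightarrow> nat" where
  "piece t = (SOME i. i \<in> {1..<n} \<and> t \<in> {x i..x (Suc i)})"

definition P' :: "real \<Rightarrow> real" where "P' t = q1 (piece t) t"

definition P'' :: "real \<Rightarrow> real" where "P'' t = q2 (piece t) t"

lemma piece_exists:
  assumes "t \<in> {x 1..x n}"
  shows "\<exists>i\<in>{1..<n}. t \<in> {x i..x (Suc i)}"
proof -
  define I where "I = {i\<in>{1..<n}. x i \<le> t}"
  have I: "finite I" "1 \<in> I" using assms two_le_n by (auto simp: I_def)
  define i where "i = Max I"
  have "i \<in> I" unfolding i_def using Max_in I by auto
  then have i: "i \<in> {1..<n}" "x i \<le> t" by (auto simp: I_def)
  have i_max: "k \<le> i" if "k \<in> {1..<n}" "x k \<le> t" for k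
    using Max_ge[OF I(1)] that unfolding i_def I_def by auto
  have "t \<le> x (Suc i)"
  proof (cases "Suc i = n")
    case False
    then show ?thesis using i i_max[of "Suc i"] by force
  qed (use assms in auto)
  then show ?thesis using i by auto
qed

lemma pieces_overlap:
  assumes "i \<in> {1..<n}" "k \<in> {1..<n}" "i < k"
    and "t \<in> {x i..x (Suc i)}" "t \<in> {x k..x (Suc k)}"
  shows "k = Suc i" "t = x k"
proof -
  have "\<not> x (Suc i) < x k" using assms(4,5) by auto
  then show "k = Suc i" using knots_less[OF knots, of "Suc i" k] assms(1-3) by fastforce
  then show "t = x k" using assms(4,5) by auto
qed

lemma piece_derivatives:
  assumes i: "i \<in> {1..<n}" and t: "t \<in> {x i..x (Suc i)}"
  shows "P' t = q1 i t" and "t \<notin> E \<or> t \<in> {x i<..<x (Suc i)} \<Longrightarrow> P'' t = q2 i t"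
proof -
  define k where "k = piece t"
  have "\<exists>i. i \<in> {1..<n} \<and> t \<in> {x i..x (Suc i)}" using i t by blast
  then have k: "k \<in> {1..<n}" "t \<in> {x k..x (Suc k)}"
    unfolding k_def piece_def by (metis (mono_tags, lifting) someI_ex)+
  have "q1 k t = q1 i t \<and> (t \<notin> E \<or> t \<in> {x i<..<x (Suc i)} \<longrightarrow> q2 k t = q2 i t)"
  proof (cases k i rule: linorder_cases)
    case less
    with pieces_overlap[OF k(1) i less k(2) t] have "i = Suc k" "t = x i" "i \<in> {2..n-1}" using i k by auto
    then show ?thesis using q1_match[of i] q2_match[of i] by auto
  next
    case greater
    with pieces_overlap[OF i k(1) greater t k(2)] have "k = Suc i" "t = x k" "k \<in> {2..n-1}" using i k by auto
    then show ?thesis using q1_match[of k] q2_match[of k] by auto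
  qed simp
  then show "P' t = q1 i t" "t \<notin> E \<or> t \<in> {x i<..<x (Suc i)} \<Longrightarrow> P'' t = q2 i t"
    unfolding P'_def P''_def k_def by auto
qed

lemma left_piece:
  assumes "t \<in> {x 1..x n}"
  obtains i where "i \<in> {1..<n}" "t \<in> {x i..x (Suc i)}" "x i < t \<or> i = 1"
proof -
  obtain i where i: "i \<in> {1..<n}" "t \<in> {x i..x (Suc i)}" using piece_exists[OF assms] by blast
  show ?thesis
  proof (cases "x i < t \<or> i = 1")
    case False
    then have "t = x i" "i - 1 \<in> {1..<n}" "Suc (i - 1) = i" using i by auto
    moreover from this have "x (i - 1) < x i" using knots by metis
    ultimately show ?thesis using that[of "i - 1"] by auto
  qed (use i that in blast)
qed

lemma right_piece:
  assumes "t \<in> {x 1..x n}"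
  obtains i where "i \<in> {1..<n}" "t \<in> {x i..x (Suc i)}" "t < x (Suc i) \<or> Suc i = n"
proof -
  obtain i where i: "i \<in> {1..<n}" "t \<in> {x i..x (Suc i)}" using piece_exists[OF assms] by blast
  show ?thesis
  proof (cases "t < x (Suc i) \<or> Suc i = n")
    case False
    then have "t = x (Suc i)" "Suc i \<in> {1..<n}" using i by auto
    moreover from this have "x (Suc i) < x (Suc (Suc i))" using knots by blast
    ultimately show ?thesis using that[of "Suc i"] by auto
  qed (use i that in blast)
qed

lemma C2_at_point:
  assumes t: "t \<in> {x 1..x n} - E"
  shows "(P has_real_derivative P' t) (at t within {x 1..x n})"
    and "(P' has_real_derivative P'' t) (at t within {x 1..x n})"
    and "continuous (at t within {x 1..x n}) P''"
proof -
  obtain l where l: "l \<in> {1..<n}" "t \<in> {x l..x (Suc l)}" "x l < t \<or> l = 1"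
    using left_piece t by blast
  obtain r where r: "r \<in> {1..<n}" "t \<in> {x r..x (Suc r)}" "t < x (Suc r) \<or> Suc r = n"
    using right_piece t by blast
  \<comment> \<open>at an end of the span one side is empty, so any positive radius works there\<close>
  define \<delta> where "\<delta> = min (if x l < t then t - x l else 1) (if t < x (Suc r) then x (Suc r) - t else 1)"
  have "0 < \<delta>" by (simp add: \<delta>_def)
  have left: "P s = q l s \<and> P' s = q1 l s \<and> P'' s = q2 l s"
    if "s \<in> {x 1..x n}" "t - \<delta> < s" "s \<le> t" for s
  proof -
    have "s \<in> {x l..x (Suc l)} \<and> (s = t \<or> s \<in> {x l<..<x (Suc l)})"
      using that l t unfolding \<delta>_def by (cases "x l < t") auto
    then show ?thesis using P_piece piece_derivatives l(1) t by blast
  qed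
  have right: "P s = q r s \<and> P' s = q1 r s \<and> P'' s = q2 r s"
    if "s \<in> {x 1..x n}" "t \<le> s" "s < t + \<delta>" for s
  proof -
    have "s \<in> {x r..x (Suc r)} \<and> (s = t \<or> s \<in> {x r<..<x (Suc r)})"
      using that r t unfolding \<delta>_def by (cases "t < x (Suc r)") auto
    then show ?thesis using P_piece piece_derivatives r(1) t by blast
  qed
  have at_t: "q1 l t = P' t" "q1 r t = P' t" "q2 l t = P'' t" "q2 r t = P'' t"
    using piece_derivatives[OF l(1,2)] piece_derivatives[OF r(1,2)] t by auto
  show "(P has_real_derivative P' t) (at t within {x 1..x n})"
    by (rule has_real_derivative_within_glue[OF _ \<open>0 < \<delta>\<close> _ _
          q_deriv[of l t, unfolded at_t] q_deriv[of r t, unfolded at_t]])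
      (use t left right in auto)
  show "(P' has_real_derivative P'' t) (at t within {x 1..x n})"
    by (rule has_real_derivative_within_glue[OF _ \<open>0 < \<delta>\<close> _ _
          q1_deriv[of l t, unfolded at_t] q1_deriv[of r t, unfolded at_t]])
      (use t left right in auto)
  show "continuous (at t within {x 1..x n}) P''"
    by (rule continuous_within_glue[OF _ \<open>0 < \<delta>\<close> _ _ q2_cont q2_cont])
      (use t left right in auto)
qed

theorem C2_except_on_span: "C2_except_on {x 1..x n} E P"
  unfolding C2_except_on_def continuous_on_eq_continuous_within
  using C2_at_point by (blast intro: continuous_within_subset)

end

lemma cubic_hermite_second_derivatives:
  fixes Q :: "real \<Rightarrow> real" and a b c d u v :: real
  assumes "u < v" and cubic: "\<forall>t\<in>{u..v}. Q t = a + b * t + c * t^2 + d * t^3"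
    and "Q u = yu" "Q v = yv" "b + 2 * c * u + 3 * d * u^2 = su" "b + 2 * c * v + 3 * d * v^2 = sv"
  shows "2 * c + 6 * d * u = (6 * ((yv - yu) / (v - u)) - 4 * su - 2 * sv) / (v - u)"
    and "2 * c + 6 * d * v = (- 6 * ((yv - yu) / (v - u)) + 2 * su + 4 * sv) / (v - u)"
proof -
  have "yu = a + b * u + c * u^2 + d * u^3" "yv = a + b * v + c * v^2 + d * v^3"
    using assms(1-4) by auto
  moreover have "(v - u) * inverse (v - u) = 1" using assms(1) by auto
  ultimately show "2 * c + 6 * d * u = (6 * ((yv - yu) / (v - u)) - 4 * su - 2 * sv) / (v - u)"
    and "2 * c + 6 * d * v = (- 6 * ((yv - yu) / (v - u)) + 2 * su + 4 * sv) / (v - u)"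
    unfolding assms(5,6)[symmetric] divide_inverse by algebra+
qed

lemma spline_row_imp_curvature_match:
  fixes a b d0 d1 d2 m0 m1 :: real
  assumes "0 < a" "0 < b"
    and "b / (a + b) * d0 + 2 * d1 + a / (a + b) * d2 = 3 * (b / (a + b) * m0 + a / (a + b) * m1)"
  shows "(- 6 * m0 + 2 * d0 + 4 * d1) / a = (6 * m1 - 4 * d1 - 2 * d2) / b"
proof -
  have "a * inverse a = 1" "b * inverse b = 1" "(a + b) * inverse (a + b) = 1" using assms(1,2) by auto
  then show ?thesis using assms(3) unfolding divide_inverse by algebra
qed

lemma pw_cubic_hermite_C2_except_on:
  fixes x F :: "nat \<Rightarrow> real" and f P :: "real \<Rightarrow> real"
  assumes knots: "\<forall>i\<in>{1..<n}. x i < x (Suc i)" and "2 \<le> n"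
    and hermite: "pw_cubic_hermite x n f F P"
    and rows: "\<And>j. j \<in> {2..n-1} \<Longrightarrow> x j \<notin> E \<Longrightarrow>
      lam x (j - 1) * F (j - 1) + 2 * F j + mu x (j - 1) * F (Suc j)
        = 3 * (lam x (j - 1) * slope f x (j - 1) + mu x (j - 1) * slope f x j)"
  shows "C2_except_on {x 1..x n} E P"
proof -
  obtain a0 a1 a2 a3 where coeffs: "\<And>i. i \<in> {1..<n} \<Longrightarrow>
      (\<forall>t\<in>{x i..x (Suc i)}. P t = a0 i + a1 i * t + a2 i * t^2 + a3 i * t^3) \<and>
      P (x i) = f (x i) \<and> P (x (Suc i)) = f (x (Suc i)) \<and>
      a1 i + 2 * a2 i * x i + 3 * a3 i * (x i)^2 = F i \<and>
      a1 i + 2 * a2 i * x (Suc i) + 3 * a3 i * (x (Suc i))^2 = F (Suc i)"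
    using hermite unfolding pw_cubic_hermite_def by metis
  define q where "q = (\<lambda>i t. a0 i + a1 i * t + a2 i * t^2 + a3 i * t^3)"
  define q1 where "q1 = (\<lambda>i t. a1 i + 2 * a2 i * t + 3 * a3 i * t^2)"
  define q2 where "q2 = (\<lambda>i t. 2 * a2 i + 6 * a3 i * t)"
  have P_piece: "P t = q i t" if "i \<in> {1..<n}" "t \<in> {x i..x (Suc i)}" for i t
    using coeffs that unfolding q_def by blast
  have q1_ends: "q1 i (x i) = F i" "q1 i (x (Suc i)) = F (Suc i)" if "i \<in> {1..<n}" for i
    using coeffs that unfolding q1_def by auto
  have q2_ends: "q2 i (x i) = (6 * slope f x i - 4 * F i - 2 * F (Suc i)) / hh x i"
    "q2 i (x (Suc i)) = (- 6 * slope f x i + 2 * F i + 4 * F (Suc i)) / hh x i"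
    if i: "i \<in> {1..<n}" for i
    using coeffs[OF i] knots i unfolding q2_def slope_def hh_def
    by (blast intro: cubic_hermite_second_derivatives)+
  interpret piecewise_C2 x n E P q q1 q2
  proof
    fix j assume j: "j \<in> {2..n-1}"
    then have pieces: "j - 1 \<in> {1..<n}" "j \<in> {1..<n}" and j_suc: "Suc (j - 1) = j" by auto
    show "q1 (j - 1) (x j) = q1 j (x j)" using q1_ends[OF pieces(1)] q1_ends[OF pieces(2)] j_suc by simp
    assume "x j \<notin> E"
    have "0 < hh x (j - 1)" "0 < hh x j" using knots pieces j_suc unfolding hh_def by force+
    from spline_row_imp_curvature_match[OF this rows[OF j \<open>x j \<notin> E\<close>, unfolded lam_def mu_def j_suc]]
    show "q2 (j - 1) (x j) = q2 j (x j)"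
      using q2_ends[OF pieces(1)] q2_ends[OF pieces(2)] j_suc by simp
  qed (use assms P_piece in \<open>auto simp: q_def q1_def q2_def power2_eq_square
         intro!: derivative_eq_intros continuous_intros\<close>)
  show ?thesis by (rule C2_except_on_span)
qed

theorem proposition1:
  fixes a b L K T :: real and f f1 f2 f3 f4 :: "real \<Rightarrow> real"
  assumes "a < b"
    and "\<And>t. t \<in> {a..b} \<Longrightarrow> (f has_real_derivative f1 t) (at t within {a..b})"
    and "\<And>t. t \<in> {a..b} \<Longrightarrow> (f1 has_real_derivative f2 t) (at t within {a..b})"
    and "\<And>t. t \<in> {a..b} \<Longrightarrow> (f2 has_real_derivative f3 t) (at t within {a..b})"
    and "\<And>t. t \<in> {a..b} \<Longrightarrow> (f3 has_real_derivative f4 t) (at t within {a..b})"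
    and "continuous_on {a..b} f4"
    and "L > 0" and "\<And>t. t \<in> {a..b} \<Longrightarrow> \<bar>f4 t\<bar> \<le> L"
    and "K > 0" and "T > 0"
  shows "\<exists>C>0. \<forall>(n::nat) (x::nat \<Rightarrow> real) (fd::nat \<Rightarrow> real) (i0::nat) (p::real) (ft::real).
     (\<forall>i\<in>{1..<n}. x i < x (Suc i)) \<longrightarrow> x 1 = a \<longrightarrow> x n = b \<longrightarrow>
     (\<forall>i\<in>{1..<n}. hmax x n / hh x i \<le> K) \<longrightarrow>
     spline_slopes f f1 x n fd \<longrightarrow>
     1 < i0 \<longrightarrow> i0 < n \<longrightarrow> p > 0 \<longrightarrow>
     \<bar>f1 (x i0) - ft\<bar> = T * hmax x n powr p \<longrightarrow>
     (let F = (\<lambda>i. if i = i0 then ft else fd i) in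
       (\<forall>i\<in>{1..n}. \<bar>F i - f1 (x i)\<bar> \<le>
           C * (if i = i0 then hmax x n powr p else hmax x n ^ 3)) \<and>
       (\<forall>P. pw_cubic_hermite x n f F P \<longrightarrow>
           C2_except_on {x 1..x n} {x (i0 - 1), x i0, x (Suc i0)} P))"
proof (intro exI[of _ "L + T"] conjI allI impI)
  show "0 < L + T" using \<open>L > 0\<close> \<open>T > 0\<close> by simp
  fix n :: nat and x fd :: "nat \<Rightarrow> real" and i0 :: nat and p ft :: real
  assume knots: "\<forall>i\<in>{1..<n}. x i < x (Suc i)" and ends: "x 1 = a" "x n = b"
    and "\<forall>i\<in>{1..<n}. hmax x n / hh x i \<le> K" and spline: "spline_slopes f f1 x n fd"
    and "1 < i0" "i0 < n" "p > 0" and perturbation: "\<bar>f1 (x i0) - ft\<bar> = T * hmax x n powr p"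
  have "2 \<le> n" using \<open>1 < i0\<close> \<open>i0 < n\<close> by simp
  have span: "{x 1..x n} = {a..b}" using ends by simp
  define F where "F = (\<lambda>i. if i = i0 then ft else fd i)"
  have "\<bar>F i - f1 (x i)\<bar> \<le> (L + T) * (if i = i0 then hmax x n powr p else hmax x n ^ 3)"
    if "i \<in> {1..n}" for i
  proof -
    have "\<bar>fd i - f1 (x i)\<bar> \<le> L * hmax x n ^ 3"
      using spline_slopes_error[OF knots \<open>2 \<le> n\<close>, unfolded span, OF assms(2-5,8) spline that] .
    moreover have "0 \<le> L * hmax x n powr p" "0 \<le> T * hmax x n ^ 3"
      using \<open>L > 0\<close> \<open>T > 0\<close> hmax_pos[OF knots \<open>2 \<le> n\<close>] by simp_all
    ultimately show ?thesis using perturbation by (simp add: F_def abs_minus_commute distrib_right)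
  qed
  moreover have "C2_except_on {x 1..x n} {x (i0 - 1), x i0, x (Suc i0)} P"
    if "pw_cubic_hermite x n f F P" for P
  proof (rule pw_cubic_hermite_C2_except_on[OF knots \<open>2 \<le> n\<close> that])
    fix j assume "j \<in> {2..n-1}" "x j \<notin> {x (i0 - 1), x i0, x (Suc i0)}"
    then have "F (j - 1) = fd (j - 1)" "F j = fd j" "F (Suc j) = fd (Suc j)"
      using \<open>1 < i0\<close> by (auto simp: F_def)
    then show "lam x (j - 1) * F (j - 1) + 2 * F j + mu x (j - 1) * F (Suc j)
        = 3 * (lam x (j - 1) * slope f x (j - 1) + mu x (j - 1) * slope f x j)"
      using spline \<open>j \<in> {2..n-1}\<close> by (simp add: spline_slopes_def)
  qed
  ultimately show "let F = (\<lambda>i. if i = i0 then ft else fd i) in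
      (\<forall>i\<in>{1..n}. \<bar>F i - f1 (x i)\<bar> \<le> (L + T) * (if i = i0 then hmax x n powr p else hmax x n ^ 3)) \<and>
      (\<forall>P. pw_cubic_hermite x n f F P \<longrightarrow> C2_except_on {x 1..x n} {x (i0 - 1), x i0, x (Suc i0)} P)"
    unfolding F_def by simp
qed

end
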